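(* Let $(\mathcal G,p)$ be a $1$-closed CPS on the finite set $\Omega$ with $\mathcal G$ closed under unions and nonempty intersections and covering $\Omega$. Then $(\mathcal G,p)$ satisfies certainty reflection if and only if for every state $\omega'$ and every state $\omega$ such that $m(\omega')\subsetneq m(\omega)$, we have $p_{m(\omega)}(m(\omega'))=1$.
   Context: $\Omega$ is a finite set; every subset is an event. A CPS is a pair $(\mathcal G,p)$ where $\mathcal G$ is a family of nonempty subsets of $\Omega$ and $p$ assigns to each $G\in\mathcal G$ a probability measure $p_G$ on $\Omega$ with $p_G(G)=1$ and $p_G(E)=p_G(F)p_F(E)$ whenever $E\subseteq F\subseteq G$, $F,G\in\mathcal G$. Atom: $m(\omega)=\bigcap\{G\in\mathcal G:\omega\in G\}$. $(\mathcal G,p)$ is $1$-closed if every $L\subseteq G$ with $G\in\mathcal G$ and $p_G(L)=1$ belongs to $\mathcal G$. Certainty reflection: for every event $E$, every $q\in[0,1]$ and every $\omega$, $p_{m(\omega)}(E)=q$ implies $p_{m(\omega)}(\{\omega'\in\Omega:p_{m(\omega')}(E)=q\})=1$. *)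

theory Defs
  imports Complex_Main
begin

definition prob_measure_on :: "'a set \<Rightarrow> ('a set \<Rightarrow> real) \<Rightarrow> bool" where
  "prob_measure_on Omega mu \<longleftrightarrow>
     (\<forall>E. E \<subseteq> Omega \<longrightarrow> 0 \<le> mu E) \<and> mu Omega = 1 \<and>
     (\<forall>E F. E \<subseteq> Omega \<longrightarrow> F \<subseteq> Omega \<longrightarrow> E \<inter> F = {} \<longrightarrow> mu (E \<union> F) = mu E + mu F)"

definition CPS :: "'a set \<Rightarrow> 'a set set \<Rightarrow> ('a set \<Rightarrow> 'a set \<Rightarrow> real) \<Rightarrow> bool" where
  "CPS Omega \<G> p \<longleftrightarrow>
     (\<forall>G\<in>\<G>. G \<noteq> {} \<and> G \<subseteq> Omega) \<and>
     (\<forall>G\<in>\<G>. prob_measure_on Omega (p G) \<and> p G G = 1) \<and>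
     (\<forall>E F G. E \<subseteq> F \<longrightarrow> F \<subseteq> G \<longrightarrow> F \<in> \<G> \<longrightarrow> G \<in> \<G> \<longrightarrow> p G E = p G F * p F E)"

definition atom :: "'a set set \<Rightarrow> 'a \<Rightarrow> 'a set" where
  "atom \<G> \<omega> = \<Inter>{G \<in> \<G>. \<omega> \<in> G}"

definition one_closed :: "'a set set \<Rightarrow> ('a set \<Rightarrow> 'a set \<Rightarrow> real) \<Rightarrow> bool" where
  "one_closed \<G> p \<longleftrightarrow> (\<forall>G\<in>\<G>. \<forall>L. L \<subseteq> G \<longrightarrow> p G L = 1 \<longrightarrow> L \<in> \<G>)"

definition certainty_reflection :: "'a set \<Rightarrow> 'a set set \<Rightarrow> ('a set \<Rightarrow> 'a set \<Rightarrow> real) \<Rightarrow> bool" where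
  "certainty_reflection Omega \<G> p \<longleftrightarrow>
     (\<forall>E q \<omega>. E \<subseteq> Omega \<longrightarrow> \<omega> \<in> Omega \<longrightarrow> p (atom \<G> \<omega>) E = q \<longrightarrow>
        p (atom \<G> \<omega>) {\<omega>' \<in> Omega. p (atom \<G> \<omega>') E = q} = 1)"

end

theory Submission
  imports Defs
begin

text \<open>
  Both conditions are equivalent to the conditional probabilities being constant on atoms:
  \<open>p\<^bsub>m(\<omega>')\<^esub> = p\<^bsub>m(\<omega>)\<^esub>\<close> whenever \<open>\<omega>' \<in> m(\<omega>)\<close>.
  If every smaller atom \<open>m(\<omega>')\<close> has \<open>p\<^bsub>m(\<omega>)\<^esub>\<close>-probability 1, constancy follows from
  the chain rule; and constancy gives certainty reflection, since the event
  \<open>{\<omega>'. p\<^bsub>m(\<omega>')\<^esub>(E) = q}\<close> then contains \<open>m(\<omega>)\<close>.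
  Conversely, under certainty reflection that event has \<open>p\<^bsub>m(\<omega>)\<^esub>\<close>-probability 1, so by
  1-closedness its intersection with \<open>m(\<omega>)\<close> belongs to \<open>\<G>\<close>; as it contains \<open>\<omega>\<close>,
  it contains the whole atom \<open>m(\<omega>)\<close>.
  Finiteness and closure under nonempty intersections only serve to make every atom a
  member of \<open>\<G>\<close>.
\<close>

lemma prob_measure_on_nonneg: "prob_measure_on Omega mu \<Longrightarrow> E \<subseteq> Omega \<Longrightarrow> 0 \<le> mu E"
  unfolding prob_measure_on_def by blast

lemma prob_measure_on_total: "prob_measure_on Omega mu \<Longrightarrow> mu Omega = 1"
  unfolding prob_measure_on_def by blast

lemma prob_measure_on_additive:
  "prob_measure_on Omega mu \<Longrightarrow> E \<subseteq> Omega \<Longrightarrow> F \<subseteq> Omega \<Longrightarrow> E \<inter> F = {} \<Longrightarrow>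
    mu (E \<union> F) = mu E + mu F"
  unfolding prob_measure_on_def by blast

lemma prob_measure_on_diff:
  assumes "prob_measure_on Omega mu" "A \<subseteq> B" "B \<subseteq> Omega"
  shows "mu (B - A) = mu B - mu A"
proof -
  have "mu (A \<union> (B - A)) = mu A + mu (B - A)"
    using assms by (intro prob_measure_on_additive[OF assms(1)]) auto
  moreover have "A \<union> (B - A) = B" using assms(2) by blast
  ultimately show ?thesis by simp
qed

lemma prob_measure_on_mono:
  assumes "prob_measure_on Omega mu" "A \<subseteq> B" "B \<subseteq> Omega"
  shows "mu A \<le> mu B"
  using prob_measure_on_diff[OF assms] prob_measure_on_nonneg[OF assms(1), of "B - A"] assms(3)
  by auto

lemma prob_measure_on_certain_mono:
  assumes "prob_measure_on Omega mu" "mu A = 1" "A \<subseteq> B" "B \<subseteq> Omega"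
  shows "mu B = 1"
  using prob_measure_on_mono[OF assms(1,3,4)] prob_measure_on_mono[OF assms(1,4) order_refl]
    prob_measure_on_total[OF assms(1)] assms(2)
  by simp

lemma prob_measure_on_Int_certain:
  assumes "prob_measure_on Omega mu" "mu F = 1" "F \<subseteq> Omega" "E \<subseteq> Omega"
  shows "mu (E \<inter> F) = mu E"
proof -
  have "mu (E - F) \<le> mu (Omega - F)"
    using assms(4) by (intro prob_measure_on_mono[OF assms(1)]) auto
  also have "\<dots> = 0"
    using prob_measure_on_diff[OF assms(1,3) order_refl] prob_measure_on_total[OF assms(1)] assms(2)
    by simp
  finally have "mu (E - F) \<le> 0" .
  moreover have "mu (E - F) = mu E - mu (E \<inter> F)"
    using prob_measure_on_diff[OF assms(1), of "E \<inter> F" E] assms(4) by (simp add: Diff_Int)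
  moreover have "0 \<le> mu (E - F)" using prob_measure_on_nonneg[OF assms(1)] assms(4) by blast
  ultimately show ?thesis by simp
qed

lemma atom_self: "\<omega> \<in> atom \<G> \<omega>"
  unfolding atom_def by blast

lemma atom_subset: "G \<in> \<G> \<Longrightarrow> \<omega> \<in> G \<Longrightarrow> atom \<G> \<omega> \<subseteq> G"
  unfolding atom_def by blast

lemma Inter_mem_if_Int_closed:
  assumes "\<And>G H. G \<in> \<G> \<Longrightarrow> H \<in> \<G> \<Longrightarrow> G \<inter> H \<noteq> {} \<Longrightarrow> G \<inter> H \<in> \<G>"
    and "finite S" "S \<noteq> {}" "S \<subseteq> \<G>" "\<forall>G\<in>S. \<omega> \<in> G"
  shows "\<Inter>S \<in> \<G>"
  using assms(2-5)
proof (induction S rule: finite_ne_induct)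
  case (insert G S)
  then have "G \<inter> \<Inter>S \<noteq> {}" by blast
  then show ?case using insert assms(1)[of G "\<Inter>S"] by simp
qed simp

lemma atom_mem_if_Int_closed:
  assumes "finite \<G>" "\<omega> \<in> \<Union>\<G>"
    and "\<And>G H. G \<in> \<G> \<Longrightarrow> H \<in> \<G> \<Longrightarrow> G \<inter> H \<noteq> {} \<Longrightarrow> G \<inter> H \<in> \<G>"
  shows "atom \<G> \<omega> \<in> \<G>"
  unfolding atom_def
  by (rule Inter_mem_if_Int_closed[OF assms(3), where \<omega> = \<omega>]) (use assms(1,2) in auto)

locale cond_prob_system =
  fixes Omega :: "'a set" and \<G> :: "'a set set" and p :: "'a set \<Rightarrow> 'a set \<Rightarrow> real"
  assumes CPS: "CPS Omega \<G> p"
begin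

lemma subset_Omega: "G \<in> \<G> \<Longrightarrow> G \<subseteq> Omega"
  using CPS unfolding CPS_def by simp

lemma prob_measure: "G \<in> \<G> \<Longrightarrow> prob_measure_on Omega (p G)"
  using CPS unfolding CPS_def by simp

lemma prob_self: "G \<in> \<G> \<Longrightarrow> p G G = 1"
  using CPS unfolding CPS_def by simp

lemma chain_rule: "E \<subseteq> F \<Longrightarrow> F \<subseteq> G \<Longrightarrow> F \<in> \<G> \<Longrightarrow> G \<in> \<G> \<Longrightarrow> p G E = p G F * p F E"
  by (rule CPS[unfolded CPS_def, THEN conjunct2, THEN conjunct2, rule_format])

lemma prob_eq_if_certain:
  assumes "F \<in> \<G>" "G \<in> \<G>" "F \<subseteq> G" "p G F = 1" "E \<subseteq> Omega"
  shows "p G E = p F E"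
proof -
  have "p G E = p G (E \<inter> F)"
    using prob_measure_on_Int_certain[OF prob_measure[OF assms(2)] assms(4)
        subset_Omega[OF assms(1)] assms(5)] ..
  also have "\<dots> = p F (E \<inter> F)"
    using chain_rule[of "E \<inter> F" F G] assms(1-4) by simp
  also have "\<dots> = p F E"
    using prob_measure_on_Int_certain[OF prob_measure[OF assms(1)] prob_self[OF assms(1)]
        subset_Omega[OF assms(1)] assms(5)] .
  finally show ?thesis .
qed

end

locale atomic_cond_prob_system = cond_prob_system +
  assumes atom_mem: "\<omega> \<in> Omega \<Longrightarrow> atom \<G> \<omega> \<in> \<G>"
begin

definition constant_on_atoms :: bool where
  "constant_on_atoms \<longleftrightarrow>
     (\<forall>\<omega>\<in>Omega. \<forall>\<omega>'\<in>atom \<G> \<omega>. \<forall>E. E \<subseteq> Omega \<longrightarrow> p (atom \<G> \<omega>') E = p (atom \<G> \<omega>) E)"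

lemma constant_on_atomsI:
  "(\<And>\<omega> \<omega>' E. \<omega> \<in> Omega \<Longrightarrow> \<omega>' \<in> atom \<G> \<omega> \<Longrightarrow> E \<subseteq> Omega \<Longrightarrow>
      p (atom \<G> \<omega>') E = p (atom \<G> \<omega>) E) \<Longrightarrow> constant_on_atoms"
  unfolding constant_on_atoms_def by blast

lemma constant_on_atomsD:
  "constant_on_atoms \<Longrightarrow> \<omega> \<in> Omega \<Longrightarrow> \<omega>' \<in> atom \<G> \<omega> \<Longrightarrow> E \<subseteq> Omega \<Longrightarrow>
    p (atom \<G> \<omega>') E = p (atom \<G> \<omega>) E"
  unfolding constant_on_atoms_def by blast

lemma atom_subset_Omega: "\<omega> \<in> Omega \<Longrightarrow> atom \<G> \<omega> \<subseteq> Omega"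
  using atom_mem subset_Omega by blast

lemma atom_subset_atom: "\<omega> \<in> Omega \<Longrightarrow> \<omega>' \<in> atom \<G> \<omega> \<Longrightarrow> atom \<G> \<omega>' \<subseteq> atom \<G> \<omega>"
  by (rule atom_subset[OF atom_mem])

lemma constant_on_atoms_imp_certainty_reflection:
  assumes "constant_on_atoms"
  shows "certainty_reflection Omega \<G> p"
  unfolding certainty_reflection_def
proof (intro allI impI)
  fix E q \<omega>
  assume E: "E \<subseteq> Omega" and \<omega>: "\<omega> \<in> Omega" and q: "p (atom \<G> \<omega>) E = q"
  let ?L = "{\<omega>' \<in> Omega. p (atom \<G> \<omega>') E = q}"
  have "atom \<G> \<omega> \<subseteq> ?L"
  proof
    fix \<omega>' assume "\<omega>' \<in> atom \<G> \<omega>"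
    then show "\<omega>' \<in> ?L"
      using atom_subset_Omega[OF \<omega>] constant_on_atomsD[OF assms \<omega> _ E] q by auto
  qed
  then show "p (atom \<G> \<omega>) ?L = 1"
    using prob_measure_on_certain_mono[OF prob_measure prob_self] atom_mem[OF \<omega>] by blast
qed

lemma certainty_reflection_imp_constant_on_atoms:
  assumes "one_closed \<G> p" "certainty_reflection Omega \<G> p"
  shows "constant_on_atoms"
proof (rule constant_on_atomsI)
  fix \<omega> \<omega>' E
  assume \<omega>: "\<omega> \<in> Omega" and \<omega>': "\<omega>' \<in> atom \<G> \<omega>" and E: "E \<subseteq> Omega"
  define M where "M = atom \<G> \<omega>"
  define L where "L = {\<eta> \<in> Omega. p (atom \<G> \<eta>) E = p M E}"
  have M: "M \<in> \<G>" using atom_mem[OF \<omega>] unfolding M_def .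
  have "p M L = 1"
    using assms(2)[unfolded certainty_reflection_def, rule_format, OF E \<omega> refl]
    unfolding L_def M_def .
  moreover have "L \<subseteq> Omega" unfolding L_def by blast
  ultimately have "p M (L \<inter> M) = 1"
    using prob_measure_on_Int_certain[OF prob_measure[OF M] prob_self[OF M] subset_Omega[OF M]]
    by simp
  then have "L \<inter> M \<in> \<G>"
    using assms(1) M unfolding one_closed_def by blast
  moreover have "\<omega> \<in> L \<inter> M" using \<omega> atom_self[of \<omega>] unfolding L_def M_def by simp
  ultimately have "M \<subseteq> L" using atom_subset[of "L \<inter> M" \<G> \<omega>] unfolding M_def by blast
  then show "p (atom \<G> \<omega>') E = p (atom \<G> \<omega>) E"
    using \<omega>' unfolding L_def M_def by blast
qed

lemma constant_on_atoms_iff_smaller_atoms_certain: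
  "constant_on_atoms \<longleftrightarrow>
    (\<forall>\<omega>'\<in>Omega. \<forall>\<omega>\<in>Omega. atom \<G> \<omega>' \<subset> atom \<G> \<omega> \<longrightarrow> p (atom \<G> \<omega>) (atom \<G> \<omega>') = 1)"
proof (intro iffI ballI impI)
  fix \<omega>' \<omega>
  assume const: constant_on_atoms
    and \<omega>': "\<omega>' \<in> Omega" and \<omega>: "\<omega> \<in> Omega" and "atom \<G> \<omega>' \<subset> atom \<G> \<omega>"
  then have "\<omega>' \<in> atom \<G> \<omega>" using atom_self[of \<omega>'] by blast
  then have "p (atom \<G> \<omega>') (atom \<G> \<omega>') = p (atom \<G> \<omega>) (atom \<G> \<omega>')"
    using constant_on_atomsD[OF const \<omega> _ atom_subset_Omega[OF \<omega>']] by blast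
  then show "p (atom \<G> \<omega>) (atom \<G> \<omega>') = 1"
    using prob_self[OF atom_mem[OF \<omega>']] by simp
next
  assume certain: "\<forall>\<omega>'\<in>Omega. \<forall>\<omega>\<in>Omega. atom \<G> \<omega>' \<subset> atom \<G> \<omega> \<longrightarrow> p (atom \<G> \<omega>) (atom \<G> \<omega>') = 1"
  show constant_on_atoms
  proof (rule constant_on_atomsI)
    fix \<omega> \<omega>' E
    assume \<omega>: "\<omega> \<in> Omega" and \<omega>': "\<omega>' \<in> atom \<G> \<omega>" and E: "E \<subseteq> Omega"
    have \<omega>'_Omega: "\<omega>' \<in> Omega" using \<omega>' atom_subset_Omega[OF \<omega>] by blast
    have sub: "atom \<G> \<omega>' \<subseteq> atom \<G> \<omega>" using atom_subset_atom[OF \<omega> \<omega>'] .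
    show "p (atom \<G> \<omega>') E = p (atom \<G> \<omega>) E"
    proof (cases "atom \<G> \<omega>' = atom \<G> \<omega>")
      case False
      then have "p (atom \<G> \<omega>) (atom \<G> \<omega>') = 1" using certain \<omega> \<omega>'_Omega sub by blast
      then show ?thesis
        using prob_eq_if_certain[OF atom_mem[OF \<omega>'_Omega] atom_mem[OF \<omega>] sub _ E] by simp
    qed simp
  qed
qed

end

theorem theorem5:
  fixes Omega :: "'a set" and \<G> :: "'a set set" and p :: "'a set \<Rightarrow> 'a set \<Rightarrow> real"
  assumes "finite Omega"
    and "CPS Omega \<G> p"
    and "one_closed \<G> p"
    and "\<And>G H. G \<in> \<G> \<Longrightarrow> H \<in> \<G> \<Longrightarrow> G \<union> H \<in> \<G>"
    and "\<And>G H. G \<in> \<G> \<Longrightarrow> H \<in> \<G> \<Longrightarrow> G \<inter> H \<noteq> {} \<Longrightarrow> G \<inter> H \<in> \<G>"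
    and "\<Union>\<G> = Omega"
  shows "certainty_reflection Omega \<G> p \<longleftrightarrow>
    (\<forall>\<omega>'\<in>Omega. \<forall>\<omega>\<in>Omega. atom \<G> \<omega>' \<subset> atom \<G> \<omega> \<longrightarrow> p (atom \<G> \<omega>) (atom \<G> \<omega>') = 1)"
proof -
  interpret cond_prob_system Omega \<G> p by unfold_locales (rule assms(2))
  have "finite \<G>"
    using finite_subset[of \<G> "Pow Omega"] assms(1) subset_Omega by blast
  then interpret atomic_cond_prob_system Omega \<G> p
    by unfold_locales (simp add: atom_mem_if_Int_closed[OF \<open>finite \<G>\<close> _ assms(5)] assms(6))
  show ?thesis
    using constant_on_atoms_imp_certainty_reflection
      certainty_reflection_imp_constant_on_atoms[OF assms(3)]
      constant_on_atoms_iff_smaller_atoms_certain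
    by blast
qed

end
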